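(* For every integer $k\ge1$, let $X_k=U_{k+1}$ and $Y_k=U_k\overset{k+2}{\sqcup}U_0$. Then $d_{\mathrm{GH}}(X_k,Y_k)\ge\frac k4$.
   Context: For metric spaces $X,Y$ and $a>0$, $X\overset{a}{\sqcup}Y$ denotes the disjoint union $Z=X\sqcup Y$ with $d_Z=d_X$ on $X$, $d_Z=d_Y$ on $Y$, and $d_Z(z,z')=a$ when one point lies in $X$ and the other in $Y$. The sequence $(U_k)_{k\ge0}$ is defined by: $U_0$ is a one-point space, $U_1$ is a two-point space with distance $1$, and $U_k=U_{k-2}\overset{k}{\sqcup}U_{k-2}$ for $k>1$. For a map $f:X\to Y$, $\operatorname{dis}(f)=\sup_{x,x'\in X}|d_X(x,x')-d_Y(f(x),f(x'))|$; for $f:X\to Y$, $g:Y\to X$, $\operatorname{codis}(f,g)=\sup_{x\in X,y\in Y}|d_X(x,g(y))-d_Y(f(x),y)|$. The Gromov--Hausdorff distance between compact metric spaces satisfies $d_{\mathrm{GH}}(X,Y)=\frac12\inf_{f:X\to Y,\,g:Y\to X}\max\{\operatorname{dis}(f),\operatorname{dis}(g),\operatorname{codis}(f,g)\}$ (equivalent to the usual definition via isometric embeddings into a common metric space). *)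

theory Defs
  imports Complex_Main
begin

type_synonym 'a mspace = "'a set \<times> ('a \<Rightarrow> 'a \<Rightarrow> real)"

text \<open>Disjoint union X \<sqcup>^a Y, realised with tagged points: True # x for x in X,
  False # y for y in Y.\<close>
definition dunion :: "bool list mspace \<Rightarrow> real \<Rightarrow> bool list mspace \<Rightarrow> bool list mspace" where
  "dunion XX a YY = (case XX of (X, dX) \<Rightarrow> case YY of (Y, dY) \<Rightarrow>
     ((Cons True) ` X \<union> (Cons False) ` Y,
      \<lambda>z z'. if hd z = hd z'
             then (if hd z then dX (tl z) (tl z') else dY (tl z) (tl z'))
             else a))"

fun U :: "nat \<Rightarrow> bool list mspace" where
  "U 0 = ({[]}, \<lambda>x y. 0)"
| "U (Suc 0) = ({[False], [True]}, \<lambda>x y. if x = y then 0 else 1)"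
| "U (Suc (Suc n)) = dunion (U n) (real (Suc (Suc n))) (U n)"

definition dis :: "'a mspace \<Rightarrow> 'b mspace \<Rightarrow> ('a \<Rightarrow> 'b) \<Rightarrow> real" where
  "dis XX YY f = (SUP p \<in> fst XX \<times> fst XX.
      \<bar>snd XX (fst p) (snd p) - snd YY (f (fst p)) (f (snd p))\<bar>)"

definition codis :: "'a mspace \<Rightarrow> 'b mspace \<Rightarrow> ('a \<Rightarrow> 'b) \<Rightarrow> ('b \<Rightarrow> 'a) \<Rightarrow> real" where
  "codis XX YY f g = (SUP p \<in> fst XX \<times> fst YY.
      \<bar>snd XX (fst p) (g (snd p)) - snd YY (f (fst p)) (snd p)\<bar>)"

definition dGH :: "'a mspace \<Rightarrow> 'b mspace \<Rightarrow> real" where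
  "dGH XX YY = (1/2) * (INF fg \<in> {(f, g). f ` fst XX \<subseteq> fst YY \<and> g ` fst YY \<subseteq> fst XX}.
      max (dis XX YY (fst fg)) (max (dis YY XX (snd fg)) (codis XX YY (fst fg) (snd fg))))"

end

theory Submission
  imports Defs
begin

text \<open>The point p of the summand U 0 of Y is at distance k + 2 from every other point of Y.
  Given f : X \<rightarrow> Y and g : Y \<rightarrow> X, put x0 = g p. If f x0 \<noteq> p, the codistortion at
  (x0, p) is already k + 2. If f x0 = p, choose x with d(x0, x) = j for some j in
  [k/2, k/2 + 2]; such a j exists because U (k+1) realises from each of its points every
  distance j \<le> k + 1 of the right parity. Since d(p, f x) is 0 or k + 2, the distortion of f
  at (x0, x) is at least k/2.\<close>

lemma fst_dunion: "fst (dunion XX a YY) = Cons True ` fst XX \<union> Cons False ` fst YY"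
  by (cases XX; cases YY) (simp add: dunion_def)

lemma snd_dunion: "snd (dunion XX a YY) z z' =
   (if hd z = hd z' then (if hd z then snd XX (tl z) (tl z') else snd YY (tl z) (tl z')) else a)"
  by (cases XX; cases YY) (simp add: dunion_def)

lemma finite_U: "finite (fst (U n))"
  by (induction n rule: U.induct) (auto simp: fst_dunion)

lemma U_nonempty: "fst (U n) \<noteq> {}"
  by (induction n rule: U.induct) (auto simp: fst_dunion)

lemma U_dist_self: "snd (U n) x x = 0"
  by (induction n arbitrary: x rule: U.induct) (auto simp: snd_dunion)

lemma U_dist_attained:
  assumes "x0 \<in> fst (U n)" "1 \<le> j" "j \<le> n" "even (n - j)"
  shows "\<exists>x \<in> fst (U n). snd (U n) x0 x = real j"
  using assms
proof (induction n arbitrary: x0 j rule: U.induct)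
  case 1
  then show ?case by simp
next
  case 2
  then show ?case by auto
next
  case (3 n)
  from \<open>x0 \<in> fst (U (Suc (Suc n)))\<close> obtain b a where x0: "x0 = b # a" and a: "a \<in> fst (U n)"
    by (auto simp: fst_dunion)
  show ?case
  proof (cases "j = Suc (Suc n)")
    case True
    have "(\<not> b) # a \<in> fst (U (Suc (Suc n)))"
      using a by (cases b) (auto simp: fst_dunion)
    moreover have "snd (U (Suc (Suc n))) x0 ((\<not> b) # a) = real j"
      using True x0 by (simp add: snd_dunion)
    ultimately show ?thesis by blast
  next
    case False
    with "3.prems" have "j \<le> n" "even (n - j)" by presburger+
    with "3.IH"[OF a] \<open>1 \<le> j\<close> obtain a' where a': "a' \<in> fst (U n)" "snd (U n) a a' = real j"
      by blast
    have "b # a' \<in> fst (U (Suc (Suc n)))"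
      using a' by (cases b) (auto simp: fst_dunion)
    moreover have "snd (U (Suc (Suc n))) x0 (b # a') = real j"
      using a' x0 by (simp add: snd_dunion)
    ultimately show ?thesis by blast
  qed
qed

lemma dunion_U0_dist:
  assumes "y \<in> fst (dunion XX a (U 0))"
  shows "snd (dunion XX a (U 0)) y [False] = (if y = [False] then 0 else a)"
    and "snd (dunion XX a (U 0)) [False] y = (if y = [False] then 0 else a)"
  using assms by (auto simp: fst_dunion snd_dunion)

lemma dis_lower_bound:
  assumes "finite (fst XX)" "x \<in> fst XX" "x' \<in> fst XX"
  shows "\<bar>snd XX x x' - snd YY (f x) (f x')\<bar> \<le> dis XX YY f"
  unfolding dis_def
  by (rule cSUP_upper2[where x = "(x, x')"]) (use assms in \<open>auto intro!: bdd_above_finite\<close>)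

lemma codis_lower_bound:
  assumes "finite (fst XX)" "finite (fst YY)" "x \<in> fst XX" "y \<in> fst YY"
  shows "\<bar>snd XX x (g y) - snd YY (f x) y\<bar> \<le> codis XX YY f g"
  unfolding codis_def
  by (rule cSUP_upper2[where x = "(x, y)"]) (use assms in \<open>auto intro!: bdd_above_finite\<close>)

lemma dGH_lower_bound:
  assumes "fst XX \<noteq> {}" "fst YY \<noteq> {}"
    and "\<And>f g. f ` fst XX \<subseteq> fst YY \<Longrightarrow> g ` fst YY \<subseteq> fst XX \<Longrightarrow>
           c \<le> max (dis XX YY f) (max (dis YY XX g) (codis XX YY f g))"
  shows "c / 2 \<le> dGH XX YY"
proof -
  obtain x y where "x \<in> fst XX" "y \<in> fst YY"
    using assms(1,2) by blast
  then have "((\<lambda>_. y), (\<lambda>_. x)) \<in> {(f, g). f ` fst XX \<subseteq> fst YY \<and> g ` fst YY \<subseteq> fst XX}"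
    by auto
  then have "c \<le> (INF fg \<in> {(f, g). f ` fst XX \<subseteq> fst YY \<and> g ` fst YY \<subseteq> fst XX}.
      max (dis XX YY (fst fg)) (max (dis YY XX (snd fg)) (codis XX YY (fst fg) (snd fg))))"
    by (intro cINF_greatest) (use assms(3) in auto)
  then show ?thesis
    unfolding dGH_def by simp
qed

lemma distortion_lower_bound_isolated_point:
  assumes fin: "finite (fst XX)" "finite (fst YY)"
    and dX_self: "\<And>x. x \<in> fst XX \<Longrightarrow> snd XX x x = 0"
    and p: "p \<in> fst YY"
    and dY_p: "\<And>y. y \<in> fst YY \<Longrightarrow> snd YY y p = (if y = p then 0 else a)"
    and dY_p': "\<And>y. y \<in> fst YY \<Longrightarrow> snd YY p y = (if y = p then 0 else a)"
    and attained: "\<And>x0. x0 \<in> fst XX \<Longrightarrow> \<exists>x \<in> fst XX. snd XX x0 x = r"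
    and c: "c \<le> a" "c \<le> r" "c \<le> a - r"
    and f: "f ` fst XX \<subseteq> fst YY" and g: "g ` fst YY \<subseteq> fst XX"
  shows "c \<le> max (dis XX YY f) (codis XX YY f g)"
proof -
  define x0 where "x0 = g p"
  have x0: "x0 \<in> fst XX" "f x0 \<in> fst YY"
    using f g p by (auto simp: x0_def)
  show ?thesis
  proof (cases "f x0 = p")
    case False
    have "\<bar>snd XX x0 (g p) - snd YY (f x0) p\<bar> \<le> codis XX YY f g"
      using codis_lower_bound[OF fin x0(1) p] .
    moreover have "snd XX x0 (g p) - snd YY (f x0) p = - a"
      using False x0 by (simp add: x0_def dX_self dY_p)
    ultimately show ?thesis using c by linarith
  next
    case True
    obtain x where x: "x \<in> fst XX" "snd XX x0 x = r"
      using attained x0(1) by blast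
    have fx: "f x \<in> fst YY"
      using f x(1) by blast
    have "\<bar>snd XX x0 x - snd YY (f x0) (f x)\<bar> \<le> dis XX YY f"
      using dis_lower_bound[OF fin(1) x0(1) x(1)] .
    moreover have "snd YY (f x0) (f x) \<in> {0, a}"
      using True dY_p' fx by simp
    ultimately show ?thesis using c x(2) by auto
  qed
qed

theorem lemma2:
  fixes k :: nat
  assumes "k \<ge> 1"
  shows "dGH (U (k + 1)) (dunion (U k) (real (k + 2)) (U 0)) \<ge> real k / 4"
proof -
  let ?X = "U (k + 1)" and ?Y = "dunion (U k) (real (k + 2)) (U 0)"
  have "\<exists>j :: nat. k \<le> 2 * j \<and> 2 * j \<le> k + 4 \<and> 1 \<le> j \<and> j \<le> k + 1 \<and> even (k + 1 - j)"
    using assms by presburger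
  then obtain j :: nat where j: "k \<le> 2 * j" "2 * j \<le> k + 4" "1 \<le> j" "j \<le> k + 1" "even (k + 1 - j)"
    by blast
  have p: "[False] \<in> fst ?Y"
    by (simp add: fst_dunion)
  have "real k / 2 \<le> max (dis ?X ?Y f) (codis ?X ?Y f g)"
    if "f ` fst ?X \<subseteq> fst ?Y" "g ` fst ?Y \<subseteq> fst ?X" for f g
    using that j U_dist_attained[of _ "k + 1" j]
    by (intro distortion_lower_bound_isolated_point[OF _ _ _ p dunion_U0_dist])
       (auto simp: finite_U fst_dunion U_dist_self)
  then have "real k / 2 / 2 \<le> dGH ?X ?Y"
    by (intro dGH_lower_bound) (auto simp: U_nonempty fst_dunion le_max_iff_disj)
  then show ?thesis by simp
qed

end
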